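(* Let $f:\mathbb{R}^n\to\mathbb{R}^n$ be locally Lipschitz with $f(0)=0$ and let $V\in C^2(\mathbb{R}^n;\mathbb{R}^+)$ be a Lyapunov function for $\dot z=f(z)$. Let $r>0$ and define $q(x):=\max\{f(x)'\nabla^2V(x+hf(x))f(x):h\in[0,r]\}$. Suppose there exist constants $\delta\in(0,r]$, $\lambda\in(0,1)$ and a neighborhood $\mathcal N$ of $0$ such that $\delta q(x)\le-2(1-\lambda)\nabla V(x)f(x)$ for all $x\in\mathcal N$. Then there exists a continuous $\varphi:\mathbb{R}^n\to(0,r]$ such that $0$ is URGAS for the hybrid system (2.2) with $F(h,x):=f(x)$ (explicit Euler). More precisely, $0$ is URGAS for (2.2) with $F(h,x)=f(x)$ whenever $\varphi:\mathbb{R}^n\to(0,r]$ is continuous and satisfies $\varphi(x)q(x)\le-2(1-\lambda)\nabla V(x)f(x)$ for all $x\in\mathbb{R}^n$.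
   Context: The hybrid system (2.2) with $F(h,x)=f(x)$: for each locally bounded $u:\mathbb{R}^+\to\mathbb{R}^+$ and $x_0$, $\tau_0=0$, $x(0)=x_0$, $h_i=\varphi(x(\tau_i))\exp(-u(\tau_i))$, $\tau_{i+1}=\tau_i+h_i$, $x(t)=x(\tau_i)+(t-\tau_i)f(x(\tau_i))$ on $[\tau_i,\tau_{i+1}]$; denote the solution $x(t,x_0;u)$. URGAS: (a) for every $\varepsilon>0$ there is $\delta'>0$ with $|x_0|<\delta'\Rightarrow|x(t,x_0;u)|<\varepsilon$ for all $t\ge0$ and all $u$; (b) for every $R$, $\sup\{|x(t,x_0;u)|:t\ge0,|x_0|\le R,u\}<\infty$; (c) for all $\varepsilon,R$ there is $T$ with $|x(t,x_0;u)|\le\varepsilon$ for $t\ge T$, $|x_0|\le R$, all locally bounded $u\ge0$. A Lyapunov function for $\dot z=f(z)$ is a positive definite, radially unbounded $C^1$ function $V$ with $\nabla V(x)f(x)<0$ for $x\ne0$. $\nabla^2V$ is the Hessian. *)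

theory Defs
  imports "HOL-Analysis.Analysis"
begin

definition loc_lipschitz :: "('a::metric_space \<Rightarrow> 'b::metric_space) \<Rightarrow> bool" where
  "loc_lipschitz f \<longleftrightarrow> (\<forall>x. \<exists>e>0. \<exists>L. lipschitz_on L (ball x e) f)"

definition admissible_input :: "(real \<Rightarrow> real) \<Rightarrow> bool" where
  "admissible_input u \<longleftrightarrow> (\<forall>t\<ge>0. u t \<ge> 0) \<and> (\<forall>T. bdd_above (u ` {0..T}))"

text \<open>Sampling times tau_i and states x(tau_i) of the hybrid system (2.2) with F(h,x) = f(x):
  h_i = phi(x(tau_i)) exp(-u(tau_i)), tau_{i+1} = tau_i + h_i, x(tau_{i+1}) = x(tau_i) + h_i f(x(tau_i)).\<close>
definition hyb_state ::
  "('a::real_normed_vector \<Rightarrow> 'a) \<Rightarrow> ('a \<Rightarrow> real) \<Rightarrow> (real \<Rightarrow> real) \<Rightarrow> 'a \<Rightarrow> nat \<Rightarrow> real \<times> 'a" where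
  "hyb_state f \<phi> u x0 i =
     ((\<lambda>(\<tau>, x). let h = \<phi> x * exp (- u \<tau>) in (\<tau> + h, x + h *\<^sub>R f x)) ^^ i) (0, x0)"

definition hyb_sol ::
  "('a::real_normed_vector \<Rightarrow> 'a) \<Rightarrow> ('a \<Rightarrow> real) \<Rightarrow> (real \<Rightarrow> real) \<Rightarrow> 'a \<Rightarrow> real \<Rightarrow> 'a \<Rightarrow> bool" where
  "hyb_sol f \<phi> u x0 t y \<longleftrightarrow>
     (\<exists>i. fst (hyb_state f \<phi> u x0 i) \<le> t \<and> t \<le> fst (hyb_state f \<phi> u x0 (Suc i)) \<and>
          y = snd (hyb_state f \<phi> u x0 i) + (t - fst (hyb_state f \<phi> u x0 i)) *\<^sub>R f (snd (hyb_state f \<phi> u x0 i)))"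

text \<open>Uniform robust global asymptotic stability of 0 for the hybrid system (2.2), F(h,x) = f(x).
  The first conjunct records that solutions are defined for all t \<ge> 0 (implicit in the paper).\<close>
definition URGAS :: "('a::real_normed_vector \<Rightarrow> 'a) \<Rightarrow> ('a \<Rightarrow> real) \<Rightarrow> bool" where
  "URGAS f \<phi> \<longleftrightarrow>
     (\<forall>x0 u. admissible_input u \<longrightarrow> (\<forall>t\<ge>0. \<exists>y. hyb_sol f \<phi> u x0 t y)) \<and>
     (\<forall>\<epsilon>>0. \<exists>\<delta>'>0. \<forall>x0 u t y. admissible_input u \<and> norm x0 < \<delta>' \<and> t \<ge> 0 \<and>
         hyb_sol f \<phi> u x0 t y \<longrightarrow> norm y < \<epsilon>) \<and>
     (\<forall>R. \<exists>M. \<forall>x0 u t y. admissible_input u \<and> norm x0 \<le> R \<and> t \<ge> 0 \<and>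
         hyb_sol f \<phi> u x0 t y \<longrightarrow> norm y \<le> M) \<and>
     (\<forall>\<epsilon>>0. \<forall>R. \<exists>T. \<forall>x0 u t y. admissible_input u \<and> norm x0 \<le> R \<and> t \<ge> T \<and>
         hyb_sol f \<phi> u x0 t y \<longrightarrow> norm y \<le> \<epsilon>)"

text \<open>q(x) = max { f(x)' Hess V(x + h f(x)) f(x) : h \<in> [0,r] }, with HV the Hessian of V.\<close>
definition q_fun :: "(real^'n \<Rightarrow> real^'n) \<Rightarrow> (real^'n \<Rightarrow> real^'n^'n) \<Rightarrow> real \<Rightarrow> real^'n \<Rightarrow> real" where
  "q_fun f HV r x = Sup ((\<lambda>h. f x \<bullet> (HV (x + h *\<^sub>R f x) *v f x)) ` {0..r})"

end

theory Submission
  imports Defs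
begin

(*
  1. Taylor: along a segment x + s v, V grows at most like V x + s (DV x . v) + s^2/2 Q,
     where Q bounds the second directional derivative v' HV v on the segment.
  2. An abstract stability result: if a continuous, proper, positive definite V satisfies the
     uniform descent estimate V (x + s f x) <= V x - s * alpha x for all 0 <= s <= phi x,
     with alpha continuous and positive off the origin and phi continuous and positive,
     then 0 is URGAS for the hybrid Euler scheme (locale descent_system).  Along every
     solution V is non-increasing, the sampling times go to infinity, and V must drop below
     any positive level within a time depending only on that level and on V x0.
  3. For a C^2 Lyapunov function the step-size condition phi x q x <= -2(1-lam) DV x . f x
     turns the Taylor bound into the descent estimate with alpha = -lam DV x . f x.
  4. Such a phi exists: near 0 it is the constant del from the hypothesis, away from 0 it
     is the continuous quotient of the decrease rate by max q 1.
*)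


section \<open>A second-order Taylor upper bound\<close>

lemma taylor_upper_bound:
  fixes V :: "'a::real_inner \<Rightarrow> real" and DV :: "'a \<Rightarrow> 'a" and H :: "'a \<Rightarrow> 'a \<Rightarrow> 'a"
  assumes V_deriv: "\<And>x. (V has_derivative (\<lambda>v. DV x \<bullet> v)) (at x)"
    and DV_deriv: "\<And>x. (DV has_derivative (H x)) (at x)"
    and curvature: "\<And>s. s \<in> {0..r} \<Longrightarrow> v \<bullet> H (x + s *\<^sub>R v) v \<le> Q"
    and h: "0 \<le> h" "h \<le> r"
  shows "V (x + h *\<^sub>R v) \<le> V x + h * (DV x \<bullet> v) + h\<^sup>2 / 2 * Q"
proof -
  have line: "((\<lambda>s. x + s *\<^sub>R v) has_derivative (\<lambda>t. t *\<^sub>R v)) (at s)" for s :: real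
    by (auto intro!: derivative_eq_intros)
  have first: "((\<lambda>s. V (x + s *\<^sub>R v)) has_real_derivative (DV (x + s *\<^sub>R v) \<bullet> v)) (at s)" for s
  proof -
    have "((\<lambda>s. V (x + s *\<^sub>R v)) has_derivative (\<lambda>t. DV (x + s *\<^sub>R v) \<bullet> (t *\<^sub>R v))) (at s)"
      by (rule has_derivative_compose[OF line V_deriv])
    moreover have "(\<lambda>t. DV (x + s *\<^sub>R v) \<bullet> (t *\<^sub>R v)) = (*) (DV (x + s *\<^sub>R v) \<bullet> v)"
      by (auto simp: mult.commute)
    ultimately show ?thesis by (simp add: has_field_derivative_def)
  qed
  have second: "((\<lambda>s. DV (x + s *\<^sub>R v) \<bullet> v) has_real_derivative (v \<bullet> H (x + s *\<^sub>R v) v)) (at s)"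
    for s
  proof -
    have "linear (H (x + s *\<^sub>R v))" using DV_deriv has_derivative_linear by blast
    then have "(\<lambda>t. H (x + s *\<^sub>R v) (t *\<^sub>R v) \<bullet> v) = (*) (v \<bullet> H (x + s *\<^sub>R v) v)"
      by (auto simp: linear_scale inner_commute mult.commute)
    moreover have "((\<lambda>s. DV (x + s *\<^sub>R v) \<bullet> v)
        has_derivative (\<lambda>t. H (x + s *\<^sub>R v) (t *\<^sub>R v) \<bullet> v)) (at s)"
      using has_derivative_compose[OF line DV_deriv] by (auto intro!: derivative_eq_intros)
    ultimately show ?thesis by (simp add: has_field_derivative_def)
  qed
  text \<open>Both remainders are non-increasing on [0, r] and vanish at 0.\<close>
  define k1 where "k1 s = DV (x + s *\<^sub>R v) \<bullet> v - DV x \<bullet> v - s * Q" for s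
  define k where "k s = V (x + s *\<^sub>R v) - V x - s * (DV x \<bullet> v) - s\<^sup>2 / 2 * Q" for s
  have dk1: "(k1 has_real_derivative (v \<bullet> H (x + s *\<^sub>R v) v - Q)) (at s)" for s
    unfolding k1_def by (auto intro!: derivative_eq_intros second)
  have dk: "(k has_real_derivative k1 s) (at s)" for s
    unfolding k_def k1_def
    by (auto intro!: derivative_eq_intros first simp: power2_eq_square algebra_simps)
  have "k1 s \<le> k1 0" if "0 \<le> s" "s \<le> r" for s
    by (rule deriv_nonpos_imp_antimono[OF dk1]) (use curvature that in auto)
  then have "k h \<le> k 0"
    by (intro deriv_nonpos_imp_antimono[OF dk]) (use h in \<open>auto simp: k1_def\<close>)
  then show ?thesis by (simp add: k_def)
qed


lemma loc_lipschitz_imp_continuous: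
  assumes "loc_lipschitz f" shows "continuous_on UNIV f"
proof -
  have "isCont f x" for x
  proof -
    obtain e L where e: "0 < e" "lipschitz_on L (ball x e) f"
      using assms unfolding loc_lipschitz_def by blast
    have "continuous_on (ball x e) f" by (rule lipschitz_on_continuous_on[OF e(2)])
    then show ?thesis using e(1) by (simp add: continuous_on_interior)
  qed
  then show ?thesis by (simp add: continuous_at_imp_continuous_on)
qed

lemma compact_positive_lower_bound:
  fixes g :: "'a::topological_space \<Rightarrow> real"
  assumes "compact K" "continuous_on K g" "\<And>x. x \<in> K \<Longrightarrow> 0 < g x"
  shows "\<exists>k>0. \<forall>x\<in>K. k \<le> g x"
proof (cases "K = {}")
  case False
  then obtain x0 where "x0 \<in> K" "\<And>x. x \<in> K \<Longrightarrow> g x0 \<le> g x"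
    using continuous_attains_inf[OF assms(1) _ assms(2)] by blast
  then show ?thesis using assms(3) by blast
qed (auto intro: exI[of _ 1])

lemma continuous_on_Sup_Icc:
  fixes G :: "'a::heine_borel \<times> real \<Rightarrow> real"
  assumes G: "continuous_on UNIV G" and ab: "a \<le> b"
  shows "continuous_on UNIV (\<lambda>x. Sup ((\<lambda>h. G (x, h)) ` {a..b}))"
proof -
  let ?M = "\<lambda>x. Sup ((\<lambda>h. G (x, h)) ` {a..b})"
  have "continuous_on {a..b} (\<lambda>h. G (x, h))" for x
    by (rule continuous_on_compose2[OF G]) (auto intro!: continuous_intros)
  then have bdd: "bdd_above ((\<lambda>h. G (x, h)) ` {a..b})" for x
    by (intro bounded_imp_bdd_above compact_imp_bounded compact_continuous_image compact_Icc)
  have ne: "{a..b} \<noteq> {}" using ab by simp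
  have Sup_close: "\<bar>?M x - ?M x'\<bar> < e"
    if "0 < e" "\<And>h. h \<in> {a..b} \<Longrightarrow> \<bar>G (x, h) - G (x', h)\<bar> < e / 2" for x x' e
  proof -
    have "?M x \<le> ?M x' + e / 2"
    proof (rule cSUP_least[OF ne])
      fix h assume h: "h \<in> {a..b}"
      then have "G (x, h) - G (x', h) < e / 2" using that(2)[OF h] unfolding abs_less_iff by linarith
      then show "G (x, h) \<le> ?M x' + e / 2" using cSUP_upper[OF h bdd, of x'] by linarith
    qed
    moreover have "?M x' \<le> ?M x + e / 2"
    proof (rule cSUP_least[OF ne])
      fix h assume h: "h \<in> {a..b}"
      then have "G (x', h) - G (x, h) < e / 2" using that(2)[OF h] unfolding abs_less_iff by linarith
      then show "G (x', h) \<le> ?M x + e / 2" using cSUP_upper[OF h bdd, of x] by linarith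
    qed
    ultimately show ?thesis using that(1) unfolding abs_less_iff by linarith
  qed
  have "isCont ?M x0" for x0
    unfolding continuous_at_eps_delta
  proof (intro allI impI)
    fix e :: real assume e: "0 < e"
    have "uniformly_continuous_on (cball x0 1 \<times> {a..b}) G"
      by (intro compact_uniformly_continuous continuous_on_subset[OF G]
          compact_Times compact_cball compact_Icc) simp
    then obtain d where d: "0 < d" "\<And>p p'. p \<in> cball x0 1 \<times> {a..b} \<Longrightarrow>
        p' \<in> cball x0 1 \<times> {a..b} \<Longrightarrow> dist p' p < d \<Longrightarrow> dist (G p') (G p) < e / 2"
      unfolding uniformly_continuous_on_def using e by (metis half_gt_zero)
    have "\<bar>?M x - ?M x0\<bar> < e" if "dist x x0 < min d 1" for x
    proof (rule Sup_close[OF e])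
      fix h assume "h \<in> {a..b}"
      then show "\<bar>G (x, h) - G (x0, h)\<bar> < e / 2"
        using that d(2)[of "(x0, h)" "(x, h)"] by (auto simp: dist_Pair_Pair dist_real_def dist_commute)
    qed
    then show "\<exists>d>0. \<forall>x. dist x x0 < d \<longrightarrow> dist (?M x) (?M x0) < e"
      using d(1) by (intro exI[of _ "min d 1"]) (auto simp: dist_real_def)
  qed
  then show ?thesis by (simp add: continuous_at_imp_continuous_on)
qed


section \<open>URGAS from a uniform descent estimate\<close>

locale descent_system =
  fixes f :: "'a::{real_normed_vector, heine_borel} \<Rightarrow> 'a" and V \<alpha> \<phi> :: "'a \<Rightarrow> real"
  assumes V_cont: "continuous_on UNIV V"
    and V0: "V 0 = 0" and V_pos: "\<And>x. x \<noteq> 0 \<Longrightarrow> 0 < V x"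
    and V_proper: "filterlim V at_top at_infinity"
    and rate_cont: "continuous_on UNIV \<alpha>"
    and rate_nonneg: "\<And>x. 0 \<le> \<alpha> x" and rate_pos: "\<And>x. x \<noteq> 0 \<Longrightarrow> 0 < \<alpha> x"
    and step_cont: "continuous_on UNIV \<phi>" and step_pos: "\<And>x. 0 < \<phi> x"
    and descent: "\<And>x s. 0 \<le> s \<Longrightarrow> s \<le> \<phi> x \<Longrightarrow> V (x + s *\<^sub>R f x) \<le> V x - s * \<alpha> x"
begin

lemma V_nonneg: "0 \<le> V x"
  using V_pos[of x] V0 by (cases "x = 0") auto

lemma sublevel_compact: "compact {x. V x \<le> c}"
proof -
  obtain b where b: "\<And>x. b \<le> norm x \<Longrightarrow> c + 1 \<le> V x"
    using V_proper unfolding filterlim_at_top eventually_at_infinity by blast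
  have "{x. V x \<le> c} \<subseteq> cball 0 b"
  proof
    fix x assume "x \<in> {x. V x \<le> c}"
    then show "x \<in> cball 0 b" using b[of x] by (cases "b \<le> norm x") auto
  qed
  then have "bounded {x. V x \<le> c}" using bounded_cball bounded_subset by blast
  moreover have "closed {x. V x \<le> c}"
    by (rule closed_Collect_le[OF V_cont continuous_on_const])
  ultimately show ?thesis by (simp add: compact_eq_bounded_closed)
qed

lemma V_small_imp_norm_small:
  assumes "0 < e" shows "\<exists>m>0. \<forall>y. V y < m \<longrightarrow> norm y < e"
proof -
  let ?S = "{x. V x \<le> 1} \<inter> {x. e \<le> norm x}"
  have "compact ?S"
    by (intro compact_Int_closed sublevel_compact closed_Collect_le continuous_on_const
        continuous_on_norm_id)
  moreover have "0 < V x" if "x \<in> ?S" for x using that assms V_pos by force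
  ultimately obtain k where k: "0 < k" "\<forall>x\<in>?S. k \<le> V x"
    using compact_positive_lower_bound continuous_on_subset[OF V_cont subset_UNIV] by blast
  show ?thesis
  proof (intro exI[of _ "min 1 k"] conjI allI impI)
    fix y assume "V y < min 1 k"
    then show "norm y < e" using k(2) by (cases "e \<le> norm y") force+
  qed (use k(1) in simp)
qed

lemma rate_lower_bound:
  assumes "0 < m" shows "\<exists>k>0. \<forall>y. m \<le> V y \<longrightarrow> V y \<le> c \<longrightarrow> k \<le> \<alpha> y"
proof -
  let ?S = "{x. V x \<le> c} \<inter> {x. m \<le> V x}"
  have "compact ?S"
    by (intro compact_Int_closed sublevel_compact closed_Collect_le continuous_on_const V_cont)
  moreover have "0 < \<alpha> x" if "x \<in> ?S" for x using that assms V0 rate_pos by force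
  ultimately obtain k where "0 < k" "\<forall>x\<in>?S. k \<le> \<alpha> x"
    using compact_positive_lower_bound continuous_on_subset[OF rate_cont subset_UNIV] by blast
  then show ?thesis by auto
qed

lemma step_lower_bound: "\<exists>p>0. \<forall>y. V y \<le> c \<longrightarrow> p \<le> \<phi> y"
  using compact_positive_lower_bound[OF sublevel_compact continuous_on_subset[OF step_cont]]
    step_pos by blast

lemma V_bounded_on_ball: "\<exists>c. \<forall>x. norm x \<le> R \<longrightarrow> V x \<le> c"
proof -
  have "bounded (V ` cball 0 R)"
    by (intro compact_imp_bounded compact_continuous_image continuous_on_subset[OF V_cont]) auto
  then show ?thesis by (force simp: bounded_iff abs_le_iff)
qed

definition tau :: "(real \<Rightarrow> real) \<Rightarrow> 'a \<Rightarrow> nat \<Rightarrow> real" where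
  "tau u x0 i = fst (hyb_state f \<phi> u x0 i)"
definition state :: "(real \<Rightarrow> real) \<Rightarrow> 'a \<Rightarrow> nat \<Rightarrow> 'a" where
  "state u x0 i = snd (hyb_state f \<phi> u x0 i)"
definition stepsize :: "(real \<Rightarrow> real) \<Rightarrow> 'a \<Rightarrow> nat \<Rightarrow> real" where
  "stepsize u x0 i = \<phi> (state u x0 i) * exp (- u (tau u x0 i))"

lemma tau_0 [simp]: "tau u x0 0 = 0" and state_0 [simp]: "state u x0 0 = x0"
  by (simp_all add: tau_def state_def hyb_state_def)

lemma tau_Suc: "tau u x0 (Suc i) = tau u x0 i + stepsize u x0 i"
  and state_Suc: "state u x0 (Suc i) = state u x0 i + stepsize u x0 i *\<^sub>R f (state u x0 i)"
  by (simp_all add: tau_def state_def stepsize_def hyb_state_def case_prod_beta Let_def)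

lemma hyb_sol_iff: "hyb_sol f \<phi> u x0 t y \<longleftrightarrow> (\<exists>i. tau u x0 i \<le> t \<and> t \<le> tau u x0 (Suc i) \<and>
    y = state u x0 i + (t - tau u x0 i) *\<^sub>R f (state u x0 i))"
  by (simp add: hyb_sol_def tau_def state_def)

lemma stepsize_pos: "0 < stepsize u x0 i"
  by (simp add: stepsize_def step_pos)

lemma tau_sum: "tau u x0 n = (\<Sum>j<n. stepsize u x0 j)"
  by (induction n) (simp_all add: tau_Suc)

lemma tau_mono: "i \<le> j \<Longrightarrow> tau u x0 i \<le> tau u x0 j"
  unfolding tau_sum by (intro sum_mono2 less_imp_le[OF stepsize_pos]) auto

lemma stepsize_le:
  assumes "admissible_input u" shows "stepsize u x0 i \<le> \<phi> (state u x0 i)"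
proof -
  have "0 \<le> u (tau u x0 i)"
    using assms tau_mono[of 0 i] by (auto simp: admissible_input_def)
  then show ?thesis using step_pos by (simp add: stepsize_def mult_left_le)
qed

text \<open>Summing the descent estimate over the first n steps.\<close>
lemma V_energy:
  assumes "admissible_input u"
  shows "V (state u x0 n) + (\<Sum>j<n. stepsize u x0 j * \<alpha> (state u x0 j)) \<le> V x0"
proof (induction n)
  case (Suc n)
  have "V (state u x0 (Suc n)) \<le> V (state u x0 n) - stepsize u x0 n * \<alpha> (state u x0 n)"
    unfolding state_Suc using stepsize_pos stepsize_le[OF assms] by (intro descent) (auto intro: less_imp_le)
  then show ?case using Suc by simp
qed simp

lemma V_antimono:
  assumes "admissible_input u" "j \<le> i" shows "V (state u x0 i) \<le> V (state u x0 j)"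
  using assms(2)
proof (induction i)
  case (Suc i)
  have "V (state u x0 (Suc i)) \<le> V (state u x0 i) - stepsize u x0 i * \<alpha> (state u x0 i)"
    unfolding state_Suc using stepsize_pos stepsize_le[OF assms(1)] by (intro descent) (auto intro: less_imp_le)
  moreover have "0 \<le> stepsize u x0 i * \<alpha> (state u x0 i)"
    using stepsize_pos rate_nonneg by (simp add: less_imp_le)
  ultimately show ?case using Suc by (cases "j = Suc i") auto
qed simp

lemma V_solution_le_sample:
  assumes "admissible_input u" "hyb_sol f \<phi> u x0 t y"
  obtains i where "V y \<le> V (state u x0 i)" "tau u x0 i \<le> t" "t \<le> tau u x0 (Suc i)"
proof -
  obtain i where i: "tau u x0 i \<le> t" "t \<le> tau u x0 (Suc i)"
    "y = state u x0 i + (t - tau u x0 i) *\<^sub>R f (state u x0 i)"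
    using assms(2) unfolding hyb_sol_iff by blast
  have "t - tau u x0 i \<le> \<phi> (state u x0 i)"
    using i(2) stepsize_le[OF assms(1), of x0 i] by (simp add: tau_Suc)
  then have "V y \<le> V (state u x0 i) - (t - tau u x0 i) * \<alpha> (state u x0 i)"
    unfolding i(3) using i(1) by (intro descent) auto
  moreover have "0 \<le> (t - tau u x0 i) * \<alpha> (state u x0 i)"
    using i rate_nonneg by simp
  ultimately have "V y \<le> V (state u x0 i)" by linarith
  then show ?thesis using that i(1,2) by blast
qed

lemma V_solution_le:
  assumes "admissible_input u" "hyb_sol f \<phi> u x0 t y" shows "V y \<le> V x0"
proof -
  obtain i where "V y \<le> V (state u x0 i)" using V_solution_le_sample[OF assms] .
  then show ?thesis using V_antimono[OF assms(1), of 0 i x0] by simp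
qed

lemma elapsed_time_above_level:
  assumes adm: "admissible_input u" and k: "\<And>y. m \<le> V y \<Longrightarrow> V y \<le> V x0 \<Longrightarrow> k \<le> \<alpha> y"
    and above: "m \<le> V (state u x0 i)"
  shows "k * tau u x0 (Suc i) \<le> V x0"
proof -
  have "k * tau u x0 (Suc i) = (\<Sum>j<Suc i. stepsize u x0 j * k)"
    unfolding tau_sum sum_distrib_left by (simp add: mult.commute del: sum.lessThan_Suc)
  also have "\<dots> \<le> (\<Sum>j<Suc i. stepsize u x0 j * \<alpha> (state u x0 j))"
  proof (intro sum_mono mult_left_mono k)
    fix j assume "j \<in> {..<Suc i}"
    then show "m \<le> V (state u x0 j)" using above V_antimono[OF adm, of j i x0] by simp
    show "V (state u x0 j) \<le> V x0" using V_antimono[OF adm, of 0 j x0] by simp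
  qed (use stepsize_pos in \<open>simp add: less_imp_le\<close>)
  also have "\<dots> \<le> V x0"
    using V_energy[OF adm, of x0 "Suc i"] V_nonneg[of "state u x0 (Suc i)"] by linarith
  finally show ?thesis .
qed

text \<open>The sampling times are unbounded: on the sublevel set of V x0 the step phi is bounded
  below, and on [0, t] the input u is bounded above, so every step before t is uniformly long.\<close>
lemma tau_unbounded:
  assumes "admissible_input u" shows "\<exists>n. t \<le> tau u x0 n"
proof (rule ccontr)
  assume "\<not> ?thesis"
  then have "tau u x0 n < t" for n by (simp add: not_le)
  then have before: "tau u x0 n \<in> {0..t}" for n using tau_mono[of 0 n u x0] by (simp add: less_imp_le)
  define U where "U = Sup (u ` {0..t})"
  have U: "u s \<le> U" if "s \<in> {0..t}" for s
    unfolding U_def using assms that by (intro cSUP_upper) (auto simp: admissible_input_def)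
  obtain p where p: "0 < p" "\<And>y. V y \<le> V x0 \<Longrightarrow> p \<le> \<phi> y" using step_lower_bound by blast
  define c where "c = p * exp (- U)"
  have long: "c \<le> stepsize u x0 n" for n
  proof -
    have "exp (- U) \<le> exp (- u (tau u x0 n))" using U[OF before] by simp
    moreover have "p \<le> \<phi> (state u x0 n)" using p(2) V_antimono[OF assms, of 0 n x0] by simp
    ultimately show ?thesis unfolding c_def stepsize_def using p(1) by (intro mult_mono) auto
  qed
  have elapsed: "real n * c \<le> tau u x0 n" for n
    using sum_mono[OF long, of "{..<n}"] by (simp add: tau_sum)
  have "0 < c" using p(1) by (simp add: c_def)
  then obtain n where "t < real n * c" using reals_Archimedean3 by blast
  then show False using elapsed[of n] before[of n] by simp
qed

lemma solutions_exist:
  assumes "admissible_input u" "0 \<le> t" shows "\<exists>y. hyb_sol f \<phi> u x0 t y"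
proof -
  obtain n where n: "t \<le> tau u x0 n" "\<And>m. m < n \<Longrightarrow> \<not> t \<le> tau u x0 m"
    using tau_unbounded[OF assms(1)] exists_least_iff[of "\<lambda>n. t \<le> tau u x0 n"] by blast
  have "\<exists>i. tau u x0 i \<le> t \<and> t \<le> tau u x0 (Suc i)"
  proof (cases n)
    case 0
    then show ?thesis using n assms(2) tau_mono[of 0 1] by (intro exI[of _ 0]) auto
  next
    case (Suc i)
    then show ?thesis using n(1) n(2)[of i] by (intro exI[of _ i]) auto
  qed
  then show ?thesis unfolding hyb_sol_iff by blast
qed

lemma uniform_stability:
  assumes "0 < e"
  shows "\<exists>d>0. \<forall>x0 u t y. admissible_input u \<and> norm x0 < d \<and> t \<ge> 0 \<and>
    hyb_sol f \<phi> u x0 t y \<longrightarrow> norm y < e"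
proof -
  obtain m where m: "0 < m" "\<And>y. V y < m \<Longrightarrow> norm y < e"
    using V_small_imp_norm_small[OF assms] by blast
  obtain d where d: "0 < d" "\<And>x. dist x 0 < d \<Longrightarrow> dist (V x) (V 0) < m"
    using V_cont m(1) unfolding continuous_on_eq_continuous_at[OF open_UNIV] continuous_at_eps_delta
    by blast
  have "V x0 < m" if "norm x0 < d" for x0 using d(2)[of x0] that V0 V_nonneg[of x0] by simp
  then show ?thesis using d(1) m(2) V_solution_le by (blast intro: le_less_trans)
qed

lemma uniform_boundedness:
  "\<exists>M. \<forall>x0 u t y. admissible_input u \<and> norm x0 \<le> R \<and> t \<ge> 0 \<and>
    hyb_sol f \<phi> u x0 t y \<longrightarrow> norm y \<le> M"
proof -
  obtain c where c: "\<And>x. norm x \<le> R \<Longrightarrow> V x \<le> c" using V_bounded_on_ball by blast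
  obtain M where "\<And>y. V y \<le> c \<Longrightarrow> norm y \<le> M"
    using compact_imp_bounded[OF sublevel_compact[of c]] by (auto simp: bounded_iff)
  then show ?thesis using c V_solution_le by (blast intro: order_trans)
qed

text \<open>Once t exceeds c / k + 1, the sample preceding t lies below the level m, because
  staying above m for that long would consume more than the initial value c of V.\<close>
lemma uniform_attractivity:
  assumes "0 < e"
  shows "\<exists>T. \<forall>x0 u t y. admissible_input u \<and> norm x0 \<le> R \<and> t \<ge> T \<and>
    hyb_sol f \<phi> u x0 t y \<longrightarrow> norm y \<le> e"
proof -
  obtain m where m: "0 < m" "\<And>y. V y < m \<Longrightarrow> norm y < e"
    using V_small_imp_norm_small[OF assms] by blast
  obtain c where c: "\<And>x. norm x \<le> R \<Longrightarrow> V x \<le> c" using V_bounded_on_ball by blast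
  obtain k where k: "0 < k" "\<And>y. m \<le> V y \<Longrightarrow> V y \<le> c \<Longrightarrow> k \<le> \<alpha> y"
    using rate_lower_bound[OF m(1)] by blast
  have "norm y \<le> e" if adm: "admissible_input u" and x0: "norm x0 \<le> R"
    and t: "c / k + 1 \<le> t" and sol: "hyb_sol f \<phi> u x0 t y" for x0 u t y
  proof -
    obtain i where i: "V y \<le> V (state u x0 i)" "t \<le> tau u x0 (Suc i)"
      using V_solution_le_sample[OF adm sol] by blast
    have "V (state u x0 i) < m"
    proof (rule ccontr)
      assume "\<not> ?thesis"
      then have "k * tau u x0 (Suc i) \<le> V x0"
        using c[OF x0] k(2) by (intro elapsed_time_above_level[OF adm]) auto
      moreover have "k * (c / k + 1) \<le> k * tau u x0 (Suc i)"
        using t i(2) k(1) by (intro mult_left_mono) auto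
      moreover have "k * (c / k + 1) = c + k" using k(1) by (simp add: field_simps)
      ultimately show False using k(1) c[OF x0] by linarith
    qed
    then show ?thesis using m(2)[of y] i(1) by simp
  qed
  then show ?thesis by blast
qed

theorem urgas: "URGAS f \<phi>"
  unfolding URGAS_def
  using solutions_exist uniform_stability uniform_boundedness uniform_attractivity by blast

end


section \<open>Explicit Euler for a C^2 Lyapunov function\<close>

locale C2_lyapunov =
  fixes f :: "real^'n \<Rightarrow> real^'n" and V :: "real^'n \<Rightarrow> real"
    and DV :: "real^'n \<Rightarrow> real^'n" and HV :: "real^'n \<Rightarrow> real^'n^'n"
  assumes f_cont: "continuous_on UNIV f" and f0: "f 0 = 0"
    and V_deriv: "\<And>x. (V has_derivative (\<lambda>v. DV x \<bullet> v)) (at x)"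
    and DV_deriv: "\<And>x. (DV has_derivative (\<lambda>v. HV x *v v)) (at x)"
    and HV_cont: "continuous_on UNIV HV"
    and V0: "V 0 = 0" and V_pos: "\<And>x. x \<noteq> 0 \<Longrightarrow> V x > 0"
    and V_proper: "filterlim V at_top at_infinity"
    and V_lyap: "\<And>x. x \<noteq> 0 \<Longrightarrow> DV x \<bullet> f x < 0"
begin

definition rate :: "real^'n \<Rightarrow> real" where "rate x = - (DV x \<bullet> f x)"

lemma V_cont: "continuous_on UNIV V"
  by (meson continuous_at_imp_continuous_on has_derivative_continuous V_deriv)

lemma rate_cont: "continuous_on UNIV rate"
proof -
  have "continuous_on UNIV DV"
    by (meson continuous_at_imp_continuous_on has_derivative_continuous DV_deriv)
  then show ?thesis unfolding rate_def by (intro continuous_intros f_cont)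
qed

lemma rate_pos: "x \<noteq> 0 \<Longrightarrow> 0 < rate x"
  using V_lyap by (simp add: rate_def)

lemma rate_nonneg: "0 \<le> rate x"
  using rate_pos[of x] f0 by (cases "x = 0") (auto simp: rate_def)

lemma budget_eq: "- 2 * (1 - lam) * (DV x \<bullet> f x) = 2 * (1 - lam) * rate x"
  by (simp add: rate_def algebra_simps)

definition curvature :: "(real^'n) \<times> real \<Rightarrow> real" where
  "curvature p = f (fst p) \<bullet> (HV (fst p + snd p *\<^sub>R f (fst p)) *v f (fst p))"

lemma curvature_cont: "continuous_on UNIV curvature"
proof -
  have cf: "continuous_on UNIV (\<lambda>p::(real^'n) \<times> real. f (fst p))"
    by (rule continuous_on_compose2[OF f_cont]) (auto intro!: continuous_intros)
  have "continuous_on UNIV (\<lambda>p::(real^'n) \<times> real. HV (fst p + snd p *\<^sub>R f (fst p)))"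
    by (rule continuous_on_compose2[OF HV_cont]) (auto intro!: continuous_intros cf)
  then show ?thesis
    unfolding curvature_def matrix_vector_mult_def by (intro continuous_intros cf)
qed

lemma q_fun_curvature: "q_fun f HV r x = Sup ((\<lambda>h. curvature (x, h)) ` {0..r})"
  by (simp add: q_fun_def curvature_def)

lemma q_fun_cont: "0 \<le> r \<Longrightarrow> continuous_on UNIV (q_fun f HV r)"
  unfolding q_fun_curvature[abs_def] by (rule continuous_on_Sup_Icc[OF curvature_cont])

lemma q_fun_upper:
  assumes "s \<in> {0..r}" shows "f x \<bullet> (HV (x + s *\<^sub>R f x) *v f x) \<le> q_fun f HV r x"
proof -
  have "bdd_above ((\<lambda>h. curvature (x, h)) ` {0..r})"
    by (intro bounded_imp_bdd_above compact_imp_bounded compact_continuous_image compact_Icc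
        continuous_on_compose2[OF curvature_cont]) (auto intro!: continuous_intros)
  then show ?thesis
    using cSUP_upper[OF assms] by (simp add: q_fun_curvature curvature_def)
qed

text \<open>The step-size condition turns the Taylor bound into the descent estimate:
  the quadratic term s^2/2 q x is absorbed by the fraction (1 - lam) of the first-order
  decrease s * rate x, leaving the decrease s * lam * rate x.\<close>
lemma euler_descent:
  assumes step: "0 \<le> s" "s \<le> \<phi>" "\<phi> \<le> r" and lam: "lam \<le> 1"
    and cond: "\<phi> * q_fun f HV r x \<le> 2 * (1 - lam) * rate x"
  shows "V (x + s *\<^sub>R f x) \<le> V x - s * (lam * rate x)"
proof -
  let ?q = "q_fun f HV r x"
  have taylor: "V (x + s *\<^sub>R f x) \<le> V x + s * (DV x \<bullet> f x) + s\<^sup>2 / 2 * ?q"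
    by (rule taylor_upper_bound[where H = "\<lambda>x v. HV x *v v", OF V_deriv DV_deriv q_fun_upper])
       (use step in auto)
  have budget: "0 \<le> 2 * (1 - lam) * rate x" using lam rate_nonneg by simp
  have "s * ?q \<le> 2 * (1 - lam) * rate x"
  proof (cases "?q \<le> 0")
    case True
    then show ?thesis using step budget by (meson mult_nonneg_nonpos order_trans)
  next
    case False
    then have "s * ?q \<le> \<phi> * ?q" using step by (intro mult_right_mono) auto
    then show ?thesis using cond by linarith
  qed
  then have "s * (s * ?q) \<le> s * (2 * (1 - lam) * rate x)"
    using step by (intro mult_left_mono) auto
  then have "s\<^sup>2 / 2 * ?q \<le> s * (1 - lam) * rate x"
    by (simp add: power2_eq_square algebra_simps)
  then show ?thesis using taylor by (simp add: rate_def algebra_simps)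
qed

theorem urgas_if_step_condition:
  assumes "continuous_on UNIV \<phi>" "\<And>x. 0 < \<phi> x \<and> \<phi> x \<le> r" "0 < lam" "lam < 1"
    and "\<And>x. \<phi> x * q_fun f HV r x \<le> - 2 * (1 - lam) * (DV x \<bullet> f x)"
  shows "URGAS f \<phi>"
proof -
  interpret descent_system f V "\<lambda>x. lam * rate x" \<phi>
  proof
    fix x s assume "0 \<le> s" "s \<le> \<phi> x"
    then show "V (x + s *\<^sub>R f x) \<le> V x - s * (lam * rate x)"
      using assms(2)[of x] assms(4) assms(5)[of x] unfolding budget_eq
      by (intro euler_descent[where \<phi> = "\<phi> x" and r = r]) auto
  qed (use assms V_cont V0 V_pos V_proper rate_cont rate_nonneg rate_pos in
      \<open>auto intro!: continuous_intros\<close>)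
  show ?thesis by (rule urgas)
qed

end


section \<open>Existence of an admissible step size\<close>

text \<open>Let beta be a continuous budget, positive off the origin, and q a continuous curvature
  bound such that del * q is within budget on a ball around 0.  Then some continuous step size
  with values in (0, r] stays within budget everywhere: take del near 0, and away from 0 the
  quotient beta / max q 1, glued continuously by replacing beta with max beta (rho - norm x).\<close>
lemma admissible_step_size_exists:
  fixes \<beta> q :: "'a::real_normed_vector \<Rightarrow> real"
  assumes cont: "continuous_on UNIV \<beta>" "continuous_on UNIV q"
    and \<beta>_nonneg: "\<And>x. 0 \<le> \<beta> x" and \<beta>_pos: "\<And>x. x \<noteq> 0 \<Longrightarrow> 0 < \<beta> x"
    and del: "0 < del" "del \<le> r" and \<rho>: "0 < \<rho>"
    and near_0: "\<And>x. norm x < \<rho> \<Longrightarrow> del * q x \<le> \<beta> x"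
  shows "\<exists>\<phi>. continuous_on UNIV \<phi> \<and> (\<forall>x. 0 < \<phi> x \<and> \<phi> x \<le> r) \<and> (\<forall>x. \<phi> x * q x \<le> \<beta> x)"
proof -
  define \<phi> where "\<phi> x = min del (max (\<beta> x) (\<rho> - norm x) / max (q x) 1)" for x
  have "continuous_on UNIV \<phi>" unfolding \<phi>_def by (intro continuous_intros cont) auto
  moreover have pos: "0 < \<phi> x" for x
  proof -
    have "0 < max (\<beta> x) (\<rho> - norm x)" using \<beta>_pos[of x] \<rho> by (cases "x = 0") auto
    then show ?thesis using del by (simp add: \<phi>_def)
  qed
  moreover have "\<phi> x * q x \<le> \<beta> x" for x
  proof (cases "q x \<le> 0")
    case True
    then show ?thesis using pos[of x] \<beta>_nonneg[of x] by (meson mult_nonneg_nonpos order_trans less_imp_le)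
  next
    case q_pos: False
    show ?thesis
    proof (cases "norm x < \<rho>")
      case True
      have "\<phi> x * q x \<le> del * q x" using q_pos by (intro mult_right_mono) (auto simp: \<phi>_def)
      then show ?thesis using near_0[OF True] by linarith
    next
      case False
      then have "max (\<beta> x) (\<rho> - norm x) = \<beta> x" using \<beta>_nonneg[of x] by simp
      then have "\<phi> x \<le> \<beta> x / max (q x) 1" by (simp add: \<phi>_def)
      then have "\<phi> x * q x \<le> \<beta> x / max (q x) 1 * q x"
        using q_pos by (intro mult_right_mono) auto
      also have "\<dots> = \<beta> x * (q x / max (q x) 1)" by simp
      also have "\<dots> \<le> \<beta> x" using \<beta>_nonneg[of x] by (intro mult_left_le) auto
      finally show ?thesis .
    qed
  qed
  ultimately show ?thesis using del by (intro exI[of _ \<phi>]) (auto simp: \<phi>_def)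
qed


theorem corollary4p7:
  fixes f :: "real^'n \<Rightarrow> real^'n"
    and V :: "real^'n \<Rightarrow> real"
    and DV :: "real^'n \<Rightarrow> real^'n"
    and HV :: "real^'n \<Rightarrow> real^'n^'n"
    and r del lam :: real
    and N :: "(real^'n) set"
  assumes f_lip: "loc_lipschitz f"
    and f0: "f 0 = 0"
    and V_deriv: "\<And>x. (V has_derivative (\<lambda>v. DV x \<bullet> v)) (at x)"
    and DV_deriv: "\<And>x. (DV has_derivative (\<lambda>v. HV x *v v)) (at x)"
    and HV_cont: "continuous_on UNIV HV"
    and V_nonneg: "\<And>x. V x \<ge> 0"
    and V0: "V 0 = 0"
    and V_pos: "\<And>x. x \<noteq> 0 \<Longrightarrow> V x > 0"
    and V_rad: "filterlim V at_top at_infinity"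
    and V_lyap: "\<And>x. x \<noteq> 0 \<Longrightarrow> DV x \<bullet> f x < 0"
    and r_pos: "r > 0"
    and del: "0 < del" "del \<le> r"
    and lam: "0 < lam" "lam < 1"
    and N: "0 \<in> interior N"
    and hyp: "\<And>x. x \<in> N \<Longrightarrow> del * q_fun f HV r x \<le> - 2 * (1 - lam) * (DV x \<bullet> f x)"
  shows "(\<exists>\<phi>. continuous_on UNIV \<phi> \<and> (\<forall>x. 0 < \<phi> x \<and> \<phi> x \<le> r) \<and> URGAS f \<phi>) \<and>
         (\<forall>\<phi>. continuous_on UNIV \<phi> \<and> (\<forall>x. 0 < \<phi> x \<and> \<phi> x \<le> r) \<and>
              (\<forall>x. \<phi> x * q_fun f HV r x \<le> - 2 * (1 - lam) * (DV x \<bullet> f x))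
              \<longrightarrow> URGAS f \<phi>)"
proof -
  interpret C2_lyapunov f V DV HV
    using loc_lipschitz_imp_continuous[OF f_lip]
    by unfold_locales (use f0 V_deriv DV_deriv HV_cont V0 V_pos V_rad V_lyap in auto)
  obtain \<rho> where \<rho>: "0 < \<rho>" "ball 0 \<rho> \<subseteq> N" using N mem_interior by blast
  have near_0: "del * q_fun f HV r x \<le> 2 * (1 - lam) * rate x" if "norm x < \<rho>" for x
    using hyp[of x] \<rho>(2) that unfolding budget_eq by (auto simp: subset_iff)
  have "continuous_on UNIV (\<lambda>x. 2 * (1 - lam) * rate x)"
    by (intro continuous_intros rate_cont)
  moreover have "0 \<le> 2 * (1 - lam) * rate x" "x \<noteq> 0 \<Longrightarrow> 0 < 2 * (1 - lam) * rate x" for x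
    using lam rate_nonneg rate_pos by auto
  ultimately obtain \<phi> where "continuous_on UNIV \<phi>" "\<forall>x. 0 < \<phi> x \<and> \<phi> x \<le> r"
      "\<forall>x. \<phi> x * q_fun f HV r x \<le> 2 * (1 - lam) * rate x"
    using admissible_step_size_exists[OF _ q_fun_cont _ _ del \<rho>(1) near_0] r_pos by auto
  then show ?thesis using urgas_if_step_condition lam unfolding budget_eq by blast
qed

end
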